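(* Let $a>\log M+3$. Suppose that: (a) $X$ is distributed as the uniform mixture of $M$ unit-variance Gaussians on $\mathbb{R}$ with true centers $\mu_1^*,\dots,\mu_M^*$, all lying in $(-\infty,-10a)\cup(a,+\infty)$, with at least one true center in $(a,3a)$; (b) the current centers $\mu_1,\dots,\mu_M\in\mathbb{R}$ are such that for every true center $\mu_j^*\in(-\infty,-10a)$ there exists $j'$ with $|\mu_{j'}-\mu_j^*|\le|\mu_j^*|/6$. Then for every $i\in[M]$ with $\mu_i\in[0,4a]$, we have $\mathbb{E}[w_i(X)X]\ge0$.
   Context: Dimension $d=1$. The uniform mixture with true centers $\mu_1^*,\dots,\mu_M^*$ has density $\frac1M\sum_j\frac{1}{\sqrt{2\pi}}e^{-(x-\mu_j^* )^2/2}$. For current centers $\mu_1,\dots,\mu_M$, the membership weights are $$w_i(x)=\frac{e^{-(x-\mu_i)^2/2}}{\sum_{j=1}^M e^{-(x-\mu_j)^2/2}}.$$ *)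

theory Defs
  imports "HOL-Probability.Probability"
begin

definition weight :: "nat \<Rightarrow> (nat \<Rightarrow> real) \<Rightarrow> nat \<Rightarrow> real \<Rightarrow> real" where
  "weight M mu i x = exp (-(x - mu i)\<^sup>2 / 2) / (\<Sum>j<M. exp (-(x - mu j)\<^sup>2 / 2))"

definition mixture_density :: "nat \<Rightarrow> (nat \<Rightarrow> real) \<Rightarrow> real \<Rightarrow> real" where
  "mixture_density M mustar x = (1 / real M) * (\<Sum>j<M. normal_density (mustar j) 1 x)"

end

theory Submission
  imports Defs
begin

text \<open>Write the expectation as the average over the true centers \<open>m\<close> of the moments
  \<open>I(m) = \<integral> w\<^sub>i(x) x N(x; m, 1) dx\<close>.
  For \<open>m > a\<close> the weight \<open>w\<^sub>i\<close> drops by at most the factor \<open>1 + M e\<^sup>2\<close> between a negative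
  \<open>x\<close> and any point of a unit window below \<open>min (\<mu>\<^sub>i + 2) m\<close>, so the negative part of \<open>I(m)\<close>
  is at most half of its positive part; hence \<open>I(m) \<ge> 0\<close>, and for the true center in \<open>(a, 3a)\<close>
  the window at \<open>(\<mu>\<^sub>i + m)/2\<close> gives \<open>I(m) \<ge> P/2\<close> with \<open>P = exp (-1 - 9a\<^sup>2/4) / (M sqrt (2\<pi>))\<close>.
  For \<open>m = -b < -10a\<close> a current center within \<open>b/6\<close> of \<open>-b\<close> forces
  \<open>w\<^sub>i(x) \<le> exp (-b\<^sup>2/24)\<close> for \<open>x < -2b/3\<close>, while the Gaussian is tiny on \<open>x \<ge> -2b/3\<close>, so
  \<open>I(m) \<ge> -P/(2M)\<close>. The \<open>M - 1\<close> other moments therefore cannot outweigh the one at the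
  center in \<open>(a, 3a)\<close>.\<close>

lemma weight_denominator_pos:
  fixes M :: nat and x :: real
  assumes "i < M"
  shows "0 < (\<Sum>j<M. exp (-(x - mu j)\<^sup>2 / 2))"
proof -
  have "{..<M} \<noteq> {}" using assms by auto
  then show ?thesis by (intro sum_pos) auto
qed

lemma weight_nonneg: "0 \<le> weight M mu i x"
  unfolding weight_def by (auto intro!: divide_nonneg_nonneg sum_nonneg)

lemma weight_pos: "i < M \<Longrightarrow> 0 < weight M mu i x"
  unfolding weight_def using weight_denominator_pos[of i M x mu] by auto

lemma weight_le_1:
  assumes "i < M"
  shows "weight M mu i x \<le> 1"
proof -
  have "exp (-(x - mu i)\<^sup>2 / 2) \<le> (\<Sum>j<M. exp (-(x - mu j)\<^sup>2 / 2))"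
    using assms by (intro member_le_sum) auto
  then show ?thesis
    unfolding weight_def using weight_denominator_pos[OF assms, of x mu] by (simp add: divide_le_eq)
qed

lemma weight_ge_exp_div:
  assumes "i < M"
  shows "exp (-(x - mu i)\<^sup>2 / 2) / real M \<le> weight M mu i x"
proof -
  have "(\<Sum>j<M. exp (-(x - mu j)\<^sup>2 / 2)) \<le> (\<Sum>j<M. 1)"
    by (intro sum_mono) auto
  then show ?thesis
    unfolding weight_def using weight_denominator_pos[OF assms, of x mu] by (intro divide_left_mono) auto
qed

lemma weight_le_exp_diff:
  assumes "j < M"
  shows "weight M mu i x \<le> exp ((x - mu j)\<^sup>2 / 2 - (x - mu i)\<^sup>2 / 2)"
proof -
  have "exp (-(x - mu j)\<^sup>2 / 2) \<le> (\<Sum>k<M. exp (-(x - mu k)\<^sup>2 / 2))"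
    using assms by (intro member_le_sum) auto
  then have "weight M mu i x \<le> exp (-(x - mu i)\<^sup>2 / 2) / exp (-(x - mu j)\<^sup>2 / 2)"
    unfolding weight_def using weight_denominator_pos[OF assms, of x mu] by (intro divide_left_mono) auto
  then show ?thesis
    by (simp add: exp_diff[symmetric])
qed

lemma inverse_weight_eq_sum:
  "1 / weight M mu i x = (\<Sum>j<M. exp ((x - mu i)\<^sup>2 / 2 - (x - mu j)\<^sup>2 / 2))"
proof -
  have "1 / weight M mu i x = (\<Sum>j<M. exp (-(x - mu j)\<^sup>2 / 2) / exp (-(x - mu i)\<^sup>2 / 2))"
    unfolding weight_def by (simp add: sum_divide_distrib)
  then show ?thesis
    by (simp add: exp_diff[symmetric])
qed

lemma borel_measurable_weight[measurable]: "weight M mu i \<in> borel_measurable borel"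
  unfolding weight_def[abs_def] by measurable

lemma exp_linear_quadratic_le:
  fixes d x y :: real
  assumes "x \<le> y" "y \<le> 2"
  shows "exp (d * y - d\<^sup>2 / 2) \<le> exp (d * x - d\<^sup>2 / 2) + exp 2"
proof (cases "d \<le> 0")
  case True
  then have "d * y \<le> d * x"
    using assms(1) by (simp add: mult_left_mono_neg)
  then show ?thesis
    by (smt (verit) exp_gt_zero exp_le_cancel_iff)
next
  case False
  have "d * y \<le> d * 2"
    using False assms(2) by (intro mult_left_mono) auto
  moreover have "0 \<le> (d - 2)\<^sup>2" by simp
  ultimately have "d * y - d\<^sup>2 / 2 \<le> 2"
    by (simp add: power2_eq_square algebra_simps)
  then show ?thesis
    by (smt (verit) exp_gt_zero exp_le_cancel_iff)
qed

lemma weight_le_mult_weight: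
  assumes "i < M" "x \<le> y" "y \<le> mu i + 2"
  shows "weight M mu i x \<le> (1 + real M * exp 2) * weight M mu i y"
proof -
  define S where "S z = (\<Sum>j<M. exp ((mu j - mu i) * (z - mu i) - (mu j - mu i)\<^sup>2 / 2))" for z
  have inverse_weight: "1 / weight M mu i z = S z" for z
    unfolding inverse_weight_eq_sum S_def
    by (intro sum.cong refl arg_cong[where f = exp]) (simp add: power2_eq_square field_simps)
  have "S y \<le> (\<Sum>j<M. exp ((mu j - mu i) * (x - mu i) - (mu j - mu i)\<^sup>2 / 2) + exp 2)"
    unfolding S_def using assms by (intro sum_mono exp_linear_quadratic_le) auto
  also have "\<dots> = S x + real M * exp 2"
    by (simp add: S_def sum.distrib)
  also have "\<dots> \<le> (1 + real M * exp 2) * S x"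
  proof -
    have "1 \<le> S x"
      unfolding S_def using assms(1)
      by (intro order.trans[OF _ member_le_sum[of i]]) auto
    then have "real M * exp 2 * 1 \<le> real M * exp 2 * S x"
      by (intro mult_left_mono) auto
    then show ?thesis
      by (simp add: algebra_simps)
  qed
  finally have "1 / weight M mu i y \<le> (1 + real M * exp 2) * (1 / weight M mu i x)"
    by (simp add: inverse_weight)
  then show ?thesis
    using weight_pos[OF assms(1), of mu x] weight_pos[OF assms(1), of mu y]
    by (simp add: divide_simps mult.commute)
qed

definition component_moment :: "nat \<Rightarrow> (nat \<Rightarrow> real) \<Rightarrow> nat \<Rightarrow> real \<Rightarrow> real" where
  "component_moment M mu i m = (\<integral>x. weight M mu i x * x * normal_density m 1 x \<partial>lborel)"

lemma integrable_weight_moment_normal: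
  assumes "i < M"
  shows "integrable lborel (\<lambda>x. weight M mu i x * x * normal_density m 1 x)"
proof (rule Bochner_Integration.integrable_bound)
  show "integrable lborel (\<lambda>x. normal_density m 1 x * x)"
    using integrable_normal_moment_nz_1[of 1 m] by simp
  show "AE x in lborel. norm (weight M mu i x * x * normal_density m 1 x) \<le> norm (normal_density m 1 x * x)"
  proof (intro AE_I2)
    fix x
    have "\<bar>weight M mu i x\<bar> * (\<bar>x\<bar> * normal_density m 1 x) \<le> 1 * (\<bar>x\<bar> * normal_density m 1 x)"
      using weight_le_1[OF assms] weight_nonneg by (intro mult_right_mono) auto
    then show "norm (weight M mu i x * x * normal_density m 1 x) \<le> norm (normal_density m 1 x * x)"
      by (simp add: abs_mult mult_ac)
  qed
qed measurable

lemma integrable_indicator_weight_moment_normal: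
  assumes "i < M" "A \<in> sets lborel"
  shows "integrable lborel (\<lambda>x. indicator A x * (weight M mu i x * x * normal_density m 1 x))"
  using integrable_mult_indicator[OF assms(2) integrable_weight_moment_normal[OF assms(1)]] by simp

lemma neg_mult_normal_density_le:
  fixes x m :: real
  assumes "x < 0" "0 < m"
  shows "- x * normal_density m 1 x \<le> exp (-(m\<^sup>2) / 2) / (exp 1 * m) * normal_density 0 1 x"
proof -
  have "- x * m \<le> exp (- x * m - 1)"
    using exp_ge_add_one_self[of "- x * m - 1"] by simp
  then have "- x * m * exp (x * m) \<le> exp (- x * m - 1) * exp (x * m)"
    by (intro mult_right_mono) auto
  also have "\<dots> = exp (- 1)"
    by (simp add: exp_add[symmetric])
  finally have "- x * exp (x * m) \<le> 1 / (exp 1 * m)"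
    using assms by (simp add: exp_minus field_simps)
  then have "exp (-(m\<^sup>2) / 2) * exp (-(x\<^sup>2) / 2) * (- x * exp (x * m))
      \<le> exp (-(m\<^sup>2) / 2) * exp (-(x\<^sup>2) / 2) * (1 / (exp 1 * m))"
    by (intro mult_left_mono) auto
  moreover have "exp (-(x - m)\<^sup>2 / 2) = exp (-(m\<^sup>2) / 2) * exp (-(x\<^sup>2) / 2) * exp (x * m)"
    by (simp add: exp_add[symmetric] power2_eq_square field_simps)
  ultimately have "- x * exp (-(x - m)\<^sup>2 / 2) \<le> exp (-(m\<^sup>2) / 2) / (exp 1 * m) * exp (-(x\<^sup>2) / 2)"
    by (simp add: mult_ac)
  then have "- x * exp (-(x - m)\<^sup>2 / 2) / sqrt (2 * pi)
      \<le> exp (-(m\<^sup>2) / 2) / (exp 1 * m) * exp (-(x\<^sup>2) / 2) / sqrt (2 * pi)"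
    by (intro divide_right_mono) auto
  then show ?thesis
    unfolding normal_density_def by simp
qed

lemma real_lt_exp_of_ln_add_lt:
  assumes "0 < M" "ln (real M) + c < m"
  shows "real M < exp (m - c)"
proof -
  have "real M = exp (ln (real M))"
    using assms(1) by simp
  also have "\<dots> < exp (m - c)"
    using assms(2) by simp
  finally show ?thesis .
qed

lemma sqrt_2_pi_le_3: "sqrt (2 * pi) \<le> 3"
proof -
  have "sqrt (2 * pi) \<le> sqrt 9"
    using pi_less_4 by (intro real_sqrt_le_mono) simp
  then show ?thesis
    by simp
qed

lemma two_le_exp_1: "2 \<le> exp (1::real)"
  using exp_ge_add_one_self[of 1] by simp

lemma two_add_two_exp_2_le: "2 + 2 * exp 2 \<le> exp (7 / 2 :: real)"
proof -
  have "4 \<le> exp (1::real) * exp 1"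
    using two_le_exp_1 mult_mono[OF two_le_exp_1 two_le_exp_1] by simp
  then have "4 \<le> exp (2::real)"
    by (simp add: exp_add[symmetric])
  moreover have "exp 2 * (5 / 2) \<le> exp 2 * exp (3 / 2 :: real)"
    using exp_ge_add_one_self[of "3 / 2"] by (intro mult_left_mono) auto
  ultimately show ?thesis
    by (simp add: exp_add[symmetric])
qed

lemma tail_constant_le:
  assumes "0 < M" "ln (real M) + 3 < m"
  shows "(1 + real M * exp 2) * (exp (-(m\<^sup>2) / 2) / (exp 1 * m))
    \<le> exp (-((m - 1)\<^sup>2) / 2) / (2 * sqrt (2 * pi))"
proof -
  have M_ge_1: "1 \<le> real M"
    using assms(1) by simp
  then have "3 < m"
    using assms(2) ln_ge_zero[OF M_ge_1] by linarith
  have "2 * sqrt (2 * pi) * (1 + real M * exp 2) \<le> 2 * 3 * (real M * (1 + exp 2))"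
    using M_ge_1 sqrt_2_pi_le_3 by (intro mult_mono) (auto simp: algebra_simps)
  also have "\<dots> \<le> 2 * 3 * (exp (m - 3) * (1 + exp 2))"
    using real_lt_exp_of_ln_add_lt[OF assms] by (intro mult_left_mono mult_right_mono) auto
  also have "\<dots> = 3 * exp (m - 3) * (2 + 2 * exp 2)"
    by (simp add: algebra_simps)
  also have "\<dots> \<le> 3 * exp (m - 3) * exp (7 / 2)"
    using two_add_two_exp_2_le by (intro mult_left_mono) auto
  also have "\<dots> \<le> m * exp (m - 3) * exp (7 / 2)"
    using \<open>3 < m\<close> by (intro mult_right_mono) auto
  also have "\<dots> = exp 1 * m * exp (m - 1 / 2)"
    by (simp add: exp_add[symmetric] mult_ac)
  finally have "2 * sqrt (2 * pi) * (1 + real M * exp 2) * exp (-(m\<^sup>2) / 2)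
      \<le> exp 1 * m * exp (m - 1 / 2) * exp (-(m\<^sup>2) / 2)"
    by (rule mult_right_mono) simp
  moreover have "exp 1 * m * exp (m - 1 / 2) * exp (-(m\<^sup>2) / 2) = exp 1 * m * exp (-((m - 1)\<^sup>2) / 2)"
    by (simp add: exp_add[symmetric] power2_eq_square field_simps)
  ultimately show ?thesis
    using \<open>3 < m\<close> by (simp add: field_simps)
qed

lemma lower_tail_moment_ge:
  assumes "i < M" "ln (real M) + 3 < m" "1 \<le> y" "y \<le> m" "y \<le> mu i + 2"
  shows "-(1/2) * (weight M mu i y * y * normal_density m 1 y)
    \<le> (\<integral>x. indicator {..<0} x * (weight M mu i x * x * normal_density m 1 x) \<partial>lborel)"
proof -
  define C where "C = 1 + real M * exp 2"
  define K where "K = exp (-(m\<^sup>2) / 2) / (exp 1 * m)"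
  have "0 < m"
    using assms(3,4) by simp
  have wy: "0 < weight M mu i y"
    using weight_pos[OF assms(1)] .
  have "-(C * weight M mu i y * K) * normal_density 0 1 x
      \<le> indicator {..<0} x * (weight M mu i x * x * normal_density m 1 x)" for x
  proof (cases "x < 0")
    case True
    have weight_x: "weight M mu i x \<le> C * weight M mu i y"
      unfolding C_def using True assms by (intro weight_le_mult_weight) auto
    have density_x: "- x * normal_density m 1 x \<le> K * normal_density 0 1 x"
      unfolding K_def using True \<open>0 < m\<close> by (rule neg_mult_normal_density_le)
    have "weight M mu i x * (- x * normal_density m 1 x)
        \<le> (C * weight M mu i y) * (K * normal_density 0 1 x)"
      using True wy by (intro mult_mono[OF weight_x density_x]) (auto simp: C_def mult_nonpos_nonneg)
    then show ?thesis
      using True by (simp add: mult_ac)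
  next
    case False
    then show ?thesis
      using wy \<open>0 < m\<close> by (simp add: C_def K_def)
  qed
  then have "(\<integral>x. -(C * weight M mu i y * K) * normal_density 0 1 x \<partial>lborel)
      \<le> (\<integral>x. indicator {..<0} x * (weight M mu i x * x * normal_density m 1 x) \<partial>lborel)"
    using assms(1) by (intro integral_mono integrable_indicator_weight_moment_normal) auto
  then have lower_tail_ge: "-(C * K * weight M mu i y)
      \<le> (\<integral>x. indicator {..<0} x * (weight M mu i x * x * normal_density m 1 x) \<partial>lborel)"
    by (simp add: mult_ac)
  have "C * K \<le> (1/2) * y * normal_density m 1 y"
  proof -
    have "(y - m)\<^sup>2 \<le> (m - 1)\<^sup>2"
      using assms(3,4) power_mono[of "m - y" "m - 1" 2] by (simp add: power2_commute)
    then have "exp (-((m - 1)\<^sup>2) / 2) / (2 * sqrt (2 * pi)) \<le> (1/2) * 1 * normal_density m 1 y"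
      unfolding normal_density_def by (simp add: divide_right_mono)
    also have "\<dots> \<le> (1/2) * y * normal_density m 1 y"
      using assms(3) by (intro mult_right_mono mult_left_mono) auto
    finally have "exp (-((m - 1)\<^sup>2) / 2) / (2 * sqrt (2 * pi)) \<le> (1/2) * y * normal_density m 1 y" .
    then show ?thesis
      unfolding C_def K_def using assms(1,2) by (intro order.trans[OF tail_constant_le]) auto
  qed
  then have "C * K * weight M mu i y \<le> (1/2) * y * normal_density m 1 y * weight M mu i y"
    using wy by (intro mult_right_mono) auto
  then show ?thesis
    using lower_tail_ge by (simp add: mult_ac)
qed

lemma component_moment_ge_half_integral:
  assumes "i < M" "0 \<le> mu i" "ln (real M) + 3 < m" "S \<in> sets lborel" "S \<subseteq> {0..}"
  shows "(1/2) * (\<integral>x. indicator S x * (weight M mu i x * x * normal_density m 1 x) \<partial>lborel)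
    \<le> component_moment M mu i m"
proof -
  define f where "f x = weight M mu i x * x * normal_density m 1 x" for x
  define Q where "Q = (\<integral>x. indicator {..<0} x * f x \<partial>lborel)"
  define c where "c = min (mu i + 2) m"
  define W where "W = {c - 1..c}"
  have int_f: "integrable lborel (\<lambda>x. indicator A x * f x)" if "A \<in> sets lborel" for A
    unfolding f_def using assms(1) that by (rule integrable_indicator_weight_moment_normal)
  have "0 < M"
    using assms(1) by simp
  then have "0 \<le> ln (real M)"
    by simp
  then have "2 \<le> c"
    using assms(2,3) unfolding c_def by simp
  have "-(1/2) * (\<integral>x. indicator W x * f x \<partial>lborel) = (\<integral>x. -(1/2) * (indicator W x * f x) \<partial>lborel)"
    by simp
  also have "\<dots> \<le> (\<integral>x. indicator W x * Q \<partial>lborel)"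
  proof (intro integral_mono)
    show "-(1/2) * (indicator W x * f x) \<le> indicator W x * Q" for x
      using lower_tail_moment_ge[OF assms(1,3), of x] \<open>2 \<le> c\<close>
      by (cases "x \<in> W") (auto simp: W_def c_def f_def Q_def)
  qed (use int_f in \<open>auto simp: W_def\<close>)
  also have "\<dots> = Q"
    by (simp add: W_def)
  finally have Q_ge: "-(1/2) * (\<integral>x. indicator W x * f x \<partial>lborel) \<le> Q" .
  have "(\<integral>x. indicator {..<0} x * f x + (1/2) * (indicator W x * f x) + (1/2) * (indicator S x * f x) \<partial>lborel)
      \<le> (\<integral>x. f x \<partial>lborel)"
  proof (intro integral_mono)
    show "indicator {..<0} x * f x + (1/2) * (indicator W x * f x) + (1/2) * (indicator S x * f x) \<le> f x" for x
      using \<open>2 \<le> c\<close> assms(5) weight_nonneg[of M mu i x]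
      by (cases "x < 0"; cases "x \<in> W"; cases "x \<in> S") (auto simp: W_def f_def)
  qed (use int_f[of UNIV] int_f assms(4) in \<open>auto simp: W_def\<close>)
  then have "Q + (1/2) * (\<integral>x. indicator W x * f x \<partial>lborel) + (1/2) * (\<integral>x. indicator S x * f x \<partial>lborel)
      \<le> (\<integral>x. f x \<partial>lborel)"
    using int_f[of "{..<0}"] int_f[of W] int_f[of S] assms(4) by (simp add: Q_def W_def)
  then show ?thesis
    using Q_ge unfolding component_moment_def f_def by linarith
qed

lemma window_integral_ge:
  assumes "i < M" "1 \<le> (mu i + m) / 2" "\<bar>m - mu i\<bar> \<le> d"
  shows "exp (-1 - d\<^sup>2 / 4) / (real M * sqrt (2 * pi))
    \<le> (\<integral>x. indicator {(mu i + m) / 2..(mu i + m) / 2 + 1} x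
          * (weight M mu i x * x * normal_density m 1 x) \<partial>lborel)"
    (is "?P \<le> (\<integral>x. indicator ?S x * _ \<partial>lborel)")
proof -
  have "?P \<le> weight M mu i x * x * normal_density m 1 x" if "x \<in> ?S" for x
  proof -
    have "(x - (mu i + m) / 2)\<^sup>2 \<le> 1"
      using that power_mono[of "x - (mu i + m) / 2" 1 2] by auto
    moreover have "(m - mu i)\<^sup>2 \<le> d\<^sup>2"
      using assms(3) power_mono[of "\<bar>m - mu i\<bar>" d 2] by simp
    moreover have "(x - mu i)\<^sup>2 + (x - m)\<^sup>2 = 2 * (x - (mu i + m) / 2)\<^sup>2 + (m - mu i)\<^sup>2 / 2"
      by (simp add: power2_eq_square field_simps)
    ultimately have "exp (-1 - d\<^sup>2 / 4) \<le> exp (-(x - mu i)\<^sup>2 / 2) * exp (-(x - m)\<^sup>2 / 2)"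
      by (simp add: exp_add[symmetric])
    then have "?P \<le> (exp (-(x - mu i)\<^sup>2 / 2) / real M) * 1 * normal_density m 1 x"
      using assms(1) unfolding normal_density_def by (simp add: divide_right_mono)
    also have "\<dots> \<le> weight M mu i x * x * normal_density m 1 x"
      using weight_ge_exp_div[OF assms(1)] weight_nonneg that assms(2) by (intro mult_mono) auto
    finally show ?thesis .
  qed
  then have "(\<integral>x. indicator ?S x * ?P \<partial>lborel)
      \<le> (\<integral>x. indicator ?S x * (weight M mu i x * x * normal_density m 1 x) \<partial>lborel)"
    using assms(1) by (intro integral_mono integrable_indicator_weight_moment_normal
        integrable_mult_left integrable_real_indicator) (auto simp: indicator_def)
  then show ?thesis
    by simp
qed

lemma weight_le_exp_of_near_center:
  assumes "j < M" "0 \<le> mu i" "0 < b" "\<bar>mu j + b\<bar> \<le> b / 6" "x < -2 * b / 3"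
  shows "weight M mu i x \<le> exp (-(b\<^sup>2) / 24)"
proof -
  have "x\<^sup>2 \<le> (x - mu i)\<^sup>2"
  proof -
    have "(x - mu i)\<^sup>2 - x\<^sup>2 = mu i * (mu i - 2 * x)"
      by (simp add: power2_eq_square algebra_simps)
    moreover have "0 \<le> mu i * (mu i - 2 * x)"
      using assms(2,3,5) by simp
    ultimately show ?thesis
      by linarith
  qed
  moreover have "(x - mu j)\<^sup>2 - x\<^sup>2 \<le> -(5 * b\<^sup>2 / 36)"
  proof -
    define p where "p = - mu j"
    have p: "5 * b / 6 \<le> p" "p \<le> 7 * b / 6"
      using assms(4) abs_le_iff[of "mu j + b" "b / 6"] unfolding p_def by linarith+
    have "(x - mu j)\<^sup>2 - x\<^sup>2 = p * (p + 2 * x)"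
      unfolding p_def by (simp add: power2_eq_square algebra_simps)
    also have "\<dots> \<le> (5 * b / 6) * (p + 2 * x)"
      using p assms(5) by (intro mult_right_mono_neg) auto
    also have "\<dots> \<le> (5 * b / 6) * (- b / 6)"
      using p assms(3,5) by (intro mult_left_mono) auto
    finally show ?thesis
      by (simp add: power2_eq_square)
  qed
  moreover have "0 \<le> b\<^sup>2"
    by simp
  ultimately have "(x - mu j)\<^sup>2 / 2 - (x - mu i)\<^sup>2 / 2 \<le> -(b\<^sup>2) / 24"
    by linarith
  then show ?thesis
    using weight_le_exp_diff[OF assms(1), of mu i x] by (meson exp_le_cancel_iff order.trans)
qed

lemma abs_le_exp_three_eighths_sq: "\<bar>u::real\<bar> \<le> exp (3 * u\<^sup>2 / 8)"
proof -
  have "(\<bar>u\<bar> - 4 / 3)\<^sup>2 = u\<^sup>2 - 8 / 3 * \<bar>u\<bar> + 16 / 9"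
    by (simp add: power2_eq_square algebra_simps)
  moreover have "0 \<le> (\<bar>u\<bar> - 4 / 3)\<^sup>2"
    by simp
  ultimately have "\<bar>u\<bar> \<le> 1 + 3 * u\<^sup>2 / 8"
    by linarith
  also have "\<dots> \<le> exp (3 * u\<^sup>2 / 8)"
    by (rule exp_ge_add_one_self)
  finally show ?thesis .
qed

lemma neg_mult_exp_sq_le:
  fixes b x :: real
  assumes "0 \<le> b"
  shows "- x * exp (- 3 * (x + b)\<^sup>2 / 8) \<le> b + 1"
proof -
  define u where "u = x + b"
  have "- x * exp (- 3 * u\<^sup>2 / 8) \<le> (b + \<bar>u\<bar>) * exp (- 3 * u\<^sup>2 / 8)"
    unfolding u_def by (intro mult_right_mono) auto
  also have "\<dots> = b * exp (- 3 * u\<^sup>2 / 8) + \<bar>u\<bar> * exp (- 3 * u\<^sup>2 / 8)"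
    by (simp add: algebra_simps)
  also have "\<dots> \<le> b * 1 + exp (3 * u\<^sup>2 / 8) * exp (- 3 * u\<^sup>2 / 8)"
    using assms abs_le_exp_three_eighths_sq[of u] by (intro add_mono mult_mono) auto
  also have "\<dots> = b + 1"
    by (simp add: exp_add[symmetric])
  finally show ?thesis
    unfolding u_def .
qed

lemma neg_weight_moment_le:
  assumes "i < M" "j < M" "0 \<le> mu i" "0 < b" "\<bar>mu j + b\<bar> \<le> b / 6" "x < 0"
  shows "- x * weight M mu i x * exp (- 3 * (x + b)\<^sup>2 / 8) \<le> (b + 1) * exp (-(b\<^sup>2) / 24)"
proof (cases "x < -2 * b / 3")
  case True
  have "weight M mu i x * (- x * exp (- 3 * (x + b)\<^sup>2 / 8)) \<le> exp (-(b\<^sup>2) / 24) * (b + 1)"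
    using assms True weight_nonneg[of M mu i x]
    by (intro mult_mono weight_le_exp_of_near_center neg_mult_exp_sq_le)
      (auto simp: mult_nonpos_nonneg)
  then show ?thesis
    by (simp add: mult_ac)
next
  case False
  then have "(b / 3)\<^sup>2 \<le> (x + b)\<^sup>2"
    using assms(4) by (intro power_mono) auto
  then have "exp (- 3 * (x + b)\<^sup>2 / 8) \<le> exp (-(b\<^sup>2) / 24)"
    by (simp add: power_divide)
  moreover have "- x * weight M mu i x \<le> b + 1"
    using False assms(6) weight_le_1[OF assms(1), of mu x] weight_nonneg[of M mu i x]
      mult_mono[of "- x" "b + 1" "weight M mu i x" 1]
    by auto
  ultimately show ?thesis
    using assms(4,6) weight_nonneg[of M mu i x] by (intro mult_mono) auto
qed

text \<open>Splitting \<open>exp (-u\<^sup>2/2) = exp (-3u\<^sup>2/8) * exp (-u\<^sup>2/8)\<close> with \<open>u = x + b\<close> leaves the density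
  of a normal law with standard deviation 2 to be integrated.\<close>
lemma component_moment_neg_ge:
  assumes "i < M" "j < M" "0 \<le> mu i" "0 < b" "\<bar>mu j + b\<bar> \<le> b / 6"
  shows "-(2 * (b + 1) * exp (-(b\<^sup>2) / 24)) \<le> component_moment M mu i (-b)"
proof -
  define K where "K = 2 * (b + 1) * exp (-(b\<^sup>2) / 24)"
  have "sqrt (2 * pi * 2\<^sup>2) = 2 * sqrt (2 * pi)"
    using real_sqrt_mult[of "2\<^sup>2" "2 * pi"] by (simp add: mult.commute)
  then have normal_density_2: "normal_density (-b) 2 x = exp (-(x + b)\<^sup>2 / 8) / (2 * sqrt (2 * pi))" for x
    unfolding normal_density_def by simp
  have "-K * normal_density (-b) 2 x \<le> weight M mu i x * x * normal_density (-b) 1 x" for x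
  proof (cases "x < 0")
    case True
    have "exp (-(x + b)\<^sup>2 / 2) = exp (- 3 * (x + b)\<^sup>2 / 8) * exp (-(x + b)\<^sup>2 / 8)"
      by (simp add: exp_add[symmetric])
    then have "- x * weight M mu i x * exp (-(x + b)\<^sup>2 / 2)
        = (- x * weight M mu i x * exp (- 3 * (x + b)\<^sup>2 / 8)) * exp (-(x + b)\<^sup>2 / 8)"
      by (simp add: mult_ac)
    also have "\<dots> \<le> ((b + 1) * exp (-(b\<^sup>2) / 24)) * exp (-(x + b)\<^sup>2 / 8)"
      using assms True by (intro mult_right_mono neg_weight_moment_le) auto
    finally have "- x * weight M mu i x * exp (-(x + b)\<^sup>2 / 2) / sqrt (2 * pi)
        \<le> (b + 1) * exp (-(b\<^sup>2) / 24) * exp (-(x + b)\<^sup>2 / 8) / sqrt (2 * pi)"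
      by (intro divide_right_mono) auto
    moreover have "K * normal_density (-b) 2 x
        = (b + 1) * exp (-(b\<^sup>2) / 24) * exp (-(x + b)\<^sup>2 / 8) / sqrt (2 * pi)"
      unfolding normal_density_2 K_def by (simp add: field_simps)
    moreover have "weight M mu i x * x * normal_density (-b) 1 x
        = -(- x * weight M mu i x * exp (-(x + b)\<^sup>2 / 2) / sqrt (2 * pi))"
      unfolding normal_density_def by simp
    ultimately show ?thesis
      by linarith
  next
    case False
    have "-K * normal_density (-b) 2 x \<le> 0"
      using assms(4) by (simp add: K_def mult_nonpos_nonneg)
    also have "0 \<le> weight M mu i x * x * normal_density (-b) 1 x"
      using False weight_nonneg[of M mu i x] by simp
    finally show ?thesis .
  qed
  then have "(\<integral>x. -K * normal_density (-b) 2 x \<partial>lborel) \<le> component_moment M mu i (-b)"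
    unfolding component_moment_def using assms(1)
    by (intro integral_mono integrable_weight_moment_normal integrable_mult_right) auto
  then show ?thesis
    by (simp add: K_def)
qed

lemma thirty_two_le_exp_5: "32 \<le> exp (5::real)"
proof -
  have "(2::real) ^ 5 \<le> exp 1 ^ 5"
    using two_le_exp_1 by (intro power_mono) auto
  then show ?thesis
    using exp_of_nat_mult[of 5 "1::real"] by simp
qed

lemma far_negative_constant_le:
  assumes "0 < M" "ln (real M) + 3 < a" "10 * a < b"
  shows "2 * (b + 1) * exp (-(b\<^sup>2) / 24)
    \<le> exp (-1 - 9 * a\<^sup>2 / 4) / (real M * sqrt (2 * pi)) / (2 * real M)"
proof -
  have "0 \<le> ln (real M)"
    using assms(1) by simp
  then have "3 < a" "30 \<le> b"
    using assms(2,3) by linarith+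
  have "real M ^ 2 \<le> exp (a - 3) ^ 2"
    using real_lt_exp_of_ln_add_lt[OF assms(1,2)] by (intro power_mono) auto
  then have M_sq: "real M ^ 2 \<le> exp (2 * a - 6)"
    by (simp add: exp_add[symmetric] power2_eq_square)
  have "(10 * a)\<^sup>2 \<le> b\<^sup>2" "30 * b \<le> b * b"
    using \<open>3 < a\<close> \<open>30 \<le> b\<close> assms(3) by (intro power_mono mult_right_mono; simp)+
  then have exponent: "3 * b / 8 + 5 \<le> b\<^sup>2 / 24 - 9 * a\<^sup>2 / 4 - 2 * a + 5"
    using assms(3) by (simp add: power2_eq_square)
  have "12 * (b + 1) \<le> 32 * (1 + 3 * b / 8)"
    by simp
  also have "\<dots> \<le> exp 5 * exp (3 * b / 8)"
    using thirty_two_le_exp_5 exp_ge_add_one_self[of "3 * b / 8"] \<open>30 \<le> b\<close>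
    by (intro mult_mono) auto
  also have "\<dots> \<le> exp (b\<^sup>2 / 24 - 9 * a\<^sup>2 / 4 - 2 * a + 5)"
    using exponent by (simp add: exp_add[symmetric])
  finally have linear_factor: "12 * (b + 1) \<le> exp (b\<^sup>2 / 24 - 9 * a\<^sup>2 / 4 - 2 * a + 5)" .
  have "4 * real M ^ 2 * sqrt (2 * pi) * ((b + 1) * exp (-(b\<^sup>2) / 24))
      \<le> 4 * exp (2 * a - 6) * 3 * ((b + 1) * exp (-(b\<^sup>2) / 24))"
    using M_sq sqrt_2_pi_le_3 \<open>30 \<le> b\<close> by (intro mult_right_mono mult_mono) auto
  also have "\<dots> = 12 * (b + 1) * (exp (2 * a - 6) * exp (-(b\<^sup>2) / 24))"
    by (simp add: mult_ac)
  also have "\<dots> \<le> exp (b\<^sup>2 / 24 - 9 * a\<^sup>2 / 4 - 2 * a + 5) * (exp (2 * a - 6) * exp (-(b\<^sup>2) / 24))"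
    using linear_factor by (intro mult_right_mono) auto
  also have "\<dots> = exp (-1 - 9 * a\<^sup>2 / 4)"
    by (simp add: exp_add[symmetric])
  finally show ?thesis
    using assms(1) by (simp add: field_simps power2_eq_square)
qed

lemma component_moment_nonneg:
  assumes "i < M" "0 \<le> mu i" "ln (real M) + 3 < m"
  shows "0 \<le> component_moment M mu i m"
  using component_moment_ge_half_integral[of i M mu m "{}"] assms by simp

lemma component_moment_ge_of_close_center:
  assumes "i < M" "0 \<le> mu i" "mu i \<le> 4 * a" "ln (real M) + 3 < a" "a < m" "m < 3 * a"
  shows "exp (-1 - 9 * a\<^sup>2 / 4) / (real M * sqrt (2 * pi)) / 2 \<le> component_moment M mu i m"
proof -
  have "0 \<le> ln (real M)"
    using assms(1) by simp
  then have "3 < a"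
    using assms(4) by linarith
  then have "1 \<le> (mu i + m) / 2" "\<bar>m - mu i\<bar> \<le> 3 * a"
    using assms(2,3,5,6) by auto
  define W where "W = (\<integral>x. indicator {(mu i + m) / 2..(mu i + m) / 2 + 1} x
    * (weight M mu i x * x * normal_density m 1 x) \<partial>lborel)"
  from window_integral_ge[of i M mu m "3 * a"] assms(1) \<open>1 \<le> (mu i + m) / 2\<close> \<open>\<bar>m - mu i\<bar> \<le> 3 * a\<close>
  have "exp (-1 - 9 * a\<^sup>2 / 4) / (real M * sqrt (2 * pi)) / 2 \<le> W / 2"
    unfolding W_def by (intro divide_right_mono) (simp_all add: power_mult_distrib)
  moreover have "(1/2) * W \<le> component_moment M mu i m"
    unfolding W_def using assms \<open>3 < a\<close> by (intro component_moment_ge_half_integral) auto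
  ultimately show ?thesis
    by linarith
qed

lemma component_moment_ge_of_far_negative:
  assumes "i < M" "j < M" "0 \<le> mu i" "ln (real M) + 3 < a" "m < -10 * a"
    and "\<bar>mu j - m\<bar> \<le> \<bar>m\<bar> / 6"
  shows "-(exp (-1 - 9 * a\<^sup>2 / 4) / (real M * sqrt (2 * pi)) / (2 * real M))
    \<le> component_moment M mu i m"
proof -
  have "0 \<le> ln (real M)"
    using assms(1) by simp
  then have "0 < - m" "\<bar>mu j + - m\<bar> \<le> - m / 6"
    using assms(4,5,6) by auto
  from component_moment_neg_ge[OF assms(1,2,3) this] far_negative_constant_le[of M a "- m"]
  show ?thesis
    using assms(1,4,5) by simp
qed

lemma integral_weight_moment_mixture:
  assumes "i < M"
  shows "(\<integral>x. weight M mu i x * x * mixture_density M mustar x \<partial>lborel)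
    = (\<Sum>j<M. component_moment M mu i (mustar j)) / real M"
proof -
  have "weight M mu i x * x * mixture_density M mustar x
      = (\<Sum>j<M. weight M mu i x * x * normal_density (mustar j) 1 x) / real M" for x
    unfolding mixture_density_def by (simp add: sum_distrib_left sum_divide_distrib mult_ac)
  moreover have "(\<integral>x. (\<Sum>j<M. weight M mu i x * x * normal_density (mustar j) 1 x) \<partial>lborel)
      = (\<Sum>j<M. component_moment M mu i (mustar j))"
    unfolding component_moment_def
    using assms by (intro Bochner_Integration.integral_sum integrable_weight_moment_normal)
  ultimately show ?thesis
    by simp
qed

lemma sum_ge_of_dominant_term:
  fixes f :: "'a \<Rightarrow> real"
  assumes "finite A" "j \<in> A" "\<And>k. k \<in> A \<Longrightarrow> - e \<le> f k" "real (card A) * e \<le> f j"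
  shows "e \<le> sum f A"
proof -
  have "real (card (A - {j})) * (- e) \<le> sum f (A - {j})"
    using assms(3) by (intro sum_bounded_below) auto
  moreover have "real (card (A - {j})) = real (card A) - 1"
    using assms(1,2) card_gt_0_iff[of A] by (auto simp: of_nat_diff)
  ultimately show ?thesis
    using assms(4) sum.remove[OF assms(1,2), of f] by (simp add: algebra_simps)
qed

theorem lemma4:
  fixes M :: nat and a :: real and mustar mu :: "nat \<Rightarrow> real" and i :: nat
  assumes ha: "a > ln (real M) + 3"
    and hsep: "\<forall>j<M. mustar j < -10 * a \<or> mustar j > a"
    and hex: "\<exists>j<M. a < mustar j \<and> mustar j < 3 * a"
    and hcov: "\<forall>j<M. mustar j < -10 * a \<longrightarrow> (\<exists>j'<M. \<bar>mu j' - mustar j\<bar> \<le> \<bar>mustar j\<bar> / 6)"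
    and hi: "i < M"
    and hmu: "0 \<le> mu i" "mu i \<le> 4 * a"
  shows "(\<integral>x. weight M mu i x * x * mixture_density M mustar x \<partial>lborel) \<ge> 0"
proof -
  define P where "P = exp (-1 - 9 * a\<^sup>2 / 4) / (real M * sqrt (2 * pi))"
  obtain j0 where j0: "j0 < M" "a < mustar j0" "mustar j0 < 3 * a"
    using hex by blast
  have "0 \<le> ln (real M)" "0 \<le> P / (2 * real M)"
    using hi by (simp_all add: P_def)
  have "- (P / (2 * real M)) \<le> component_moment M mu i (mustar j)" if "j < M" for j
  proof (cases "mustar j < -10 * a")
    case True
    then show ?thesis
      using hcov that ha hi hmu component_moment_ge_of_far_negative unfolding P_def by blast
  next
    case False
    then have "0 \<le> component_moment M mu i (mustar j)"
      using hsep that ha hi hmu \<open>0 \<le> ln (real M)\<close> by (intro component_moment_nonneg) auto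
    then show ?thesis
      using \<open>0 \<le> P / (2 * real M)\<close> by linarith
  qed
  moreover have "real (card {..<M}) * (P / (2 * real M)) \<le> component_moment M mu i (mustar j0)"
    using component_moment_ge_of_close_center[of i M mu a "mustar j0"] hi hmu ha j0
    unfolding P_def[symmetric] by simp
  ultimately have "P / (2 * real M) \<le> (\<Sum>j<M. component_moment M mu i (mustar j))"
    using j0(1) by (intro sum_ge_of_dominant_term) auto
  then show ?thesis
    unfolding integral_weight_moment_mixture[OF hi] using \<open>0 \<le> P / (2 * real M)\<close> by simp
qed

end
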